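(* Assume that for every company $i\in\mathcal C$, every vehicle of company $i$ can reach at least one station and $\overline{\mathcal K}_i\ne\emptyset$. Under the system optimal pricing policies $p_i$, every Nash equilibrium $x^*$ of the game $G$ satisfies $$x^*\in\arg\min_{x\in\overline{\mathcal K}}J_G(\sigma(x)),\qquad J_G(\sigma)=\tfrac12\sigma^TA_G\sigma+b_G^T\sigma .$$
   Context: Setting: $\mathcal C$ is a finite nonempty set of companies; $\mathcal M$ is a finite set of charging stations with $m=|\mathcal M|\ge2$. Company $i$ owns a finite set $\mathcal V_i$ of vehicles, $N_i=|\mathcal V_i|\ge1$, and $\mathcal F^i_j\subseteq\mathcal V_i$ is the set of its vehicles that can reach station $j$. $\mathcal P_{\mathcal M}=\{x\in\mathbb R_{\ge0}^{\mathcal M}:\sum_j x_j=1\}$. For each $i$, $\overline{\mathcal K}_i$ is the set of $x^i\in\mathcal P_{\mathcal M}$ such that for every proper subset $S\subsetneq\mathcal M$: $N_i\sum_{j\in S}x^i_j\le\max\{0,|\bigcup_{j\in S}\mathcal F^i_j|-|S|\}$. Let $\overline{\mathcal K}=\prod_{i\in\mathcal C}\overline{\mathcal K}_i$; for $x=(x^i)_{i\in\mathcal C}\in\overline{\mathcal K}$ write $x^{-i}=(x^j)_{j\ne i}$, $\sigma(x)=\sum_{i}N_ix^i$, $\sigma(x^{-i})=\sum_{j\neq i}N_jx^j$. Data: $A_G\in\mathbb R^{\mathcal M\times\mathcal M}$ diagonal positive definite, $b_G\in\mathbb R^{\mathcal M}$; for each $i$, diagonal matrices $A_i,B_i\in\mathbb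 R^{\mathcal M\times\mathcal M}$, vectors $c_i,f_i\in\mathbb R^{\mathcal M}$, and a diagonal positive semidefinite $D_i$ with $(D_i)_{jj}>0$ whenever $\mathcal F^i_j\neq\emptyset$. For a diagonal matrix $D$, $D^*$ is the diagonal matrix with $D^*_{jj}=1/D_{jj}$ if $D_{jj}\ne0$ and $0$ otherwise. System optimal pricing policies: $p_i(x^i,x^{-i})=D_i^*\big[\tfrac12\overline A_ix^i+\overline B_i\sigma(x^{-i})+\Delta_i\big]$ with $\overline A_i=N_i^2A_G-A_i$, $\overline B_i=N_iA_G-B_i$, $\Delta_i=N_ib_G-c_i-f_i$. Company cost: $J^i(x^i,x^{-i})=\tfrac12(x^i)^TA_ix^i+(x^i)^TB_i\sigma(x^{-i})+c_i^Tx^i+(x^i)^TD_ip_i(x^i,x^{-i})+f_i^Tx^i$. Game $G$: each company $i$ chooses $x^i\in\overline{\mathcal K}_i$ to minimize $J^i(x^i,x^{-i})$. A Nash equilibrium is $x^*\in\overline{\mathcal K}$ with $J^i(x^{*i},x^{*-i})\le J^i(y^i,x^{*-i})$ for all $y^i\in\overline{\mathcal K}_i$ and all $i\in\mathcal C$. *)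

theory Defs
  imports Complex_Main
begin

text \<open>All matrices in the model are diagonal; a diagonal matrix on the station set is
represented by its diagonal, a function from stations to reals. Vectors in R^M are
functions from stations to reals (only values on M matter).\<close>

definition prob_simplex :: "'m set \<Rightarrow> ('m \<Rightarrow> real) set" where
  "prob_simplex M = {x. (\<forall>j\<in>M. 0 \<le> x j) \<and> (\<forall>j. j \<notin> M \<longrightarrow> x j = 0) \<and> (\<Sum>j\<in>M. x j) = 1}"

text \<open>Feasible set of company i: N = number of vehicles, F j = vehicles able to reach j.\<close>
definition Kbar_i :: "'m set \<Rightarrow> nat \<Rightarrow> ('m \<Rightarrow> 'v set) \<Rightarrow> ('m \<Rightarrow> real) set" where
  "Kbar_i M N F = {x \<in> prob_simplex M. \<forall>S. S \<subset> M \<longrightarrow>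
      real N * (\<Sum>j\<in>S. x j) \<le> max 0 (real (card (\<Union>j\<in>S. F j)) - real (card S))}"

definition Kbar :: "'c set \<Rightarrow> 'm set \<Rightarrow> ('c \<Rightarrow> 'v set) \<Rightarrow> ('c \<Rightarrow> 'm \<Rightarrow> 'v set)
    \<Rightarrow> ('c \<Rightarrow> 'm \<Rightarrow> real) set" where
  "Kbar C M V F = {x. \<forall>i\<in>C. x i \<in> Kbar_i M (card (V i)) (F i)}"

text \<open>sigma(x) restricted to a set of companies I (I = C gives sigma(x), I = C - {i} gives sigma(x^{-i})).\<close>
definition agg :: "'c set \<Rightarrow> ('c \<Rightarrow> 'v set) \<Rightarrow> ('c \<Rightarrow> 'm \<Rightarrow> real) \<Rightarrow> 'm \<Rightarrow> real" where
  "agg I V x = (\<lambda>j. \<Sum>i\<in>I. real (card (V i)) * x i j)"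

definition Dstar :: "real \<Rightarrow> real" where
  "Dstar d = (if d \<noteq> 0 then 1 / d else 0)"

text \<open>System optimal price of company i at station j, given own strategy xi and
sigma(x^{-i}) = s; N = N_i.\<close>
definition price :: "('m \<Rightarrow> real) \<Rightarrow> ('m \<Rightarrow> real) \<Rightarrow> nat \<Rightarrow> ('m \<Rightarrow> real) \<Rightarrow> ('m \<Rightarrow> real)
    \<Rightarrow> ('m \<Rightarrow> real) \<Rightarrow> ('m \<Rightarrow> real) \<Rightarrow> ('m \<Rightarrow> real) \<Rightarrow> ('m \<Rightarrow> real) \<Rightarrow> ('m \<Rightarrow> real) \<Rightarrow> 'm \<Rightarrow> real" where
  "price AG bG N A B c f D xi s = (\<lambda>j. Dstar (D j) *
      ((1/2) * (real N ^ 2 * AG j - A j) * xi j + (real N * AG j - B j) * s j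
       + (real N * bG j - c j - f j)))"

text \<open>Company cost J^i(x^i, x^{-i}) with s = sigma(x^{-i}).\<close>
definition Jcomp :: "'m set \<Rightarrow> ('m \<Rightarrow> real) \<Rightarrow> ('m \<Rightarrow> real) \<Rightarrow> nat \<Rightarrow> ('m \<Rightarrow> real) \<Rightarrow> ('m \<Rightarrow> real)
    \<Rightarrow> ('m \<Rightarrow> real) \<Rightarrow> ('m \<Rightarrow> real) \<Rightarrow> ('m \<Rightarrow> real) \<Rightarrow> ('m \<Rightarrow> real) \<Rightarrow> ('m \<Rightarrow> real) \<Rightarrow> real" where
  "Jcomp M AG bG N A B c f D xi s =
     (1/2) * (\<Sum>j\<in>M. A j * xi j ^ 2) + (\<Sum>j\<in>M. xi j * B j * s j) + (\<Sum>j\<in>M. c j * xi j)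
     + (\<Sum>j\<in>M. xi j * D j * price AG bG N A B c f D xi s j) + (\<Sum>j\<in>M. f j * xi j)"

definition JG :: "'m set \<Rightarrow> ('m \<Rightarrow> real) \<Rightarrow> ('m \<Rightarrow> real) \<Rightarrow> ('m \<Rightarrow> real) \<Rightarrow> real" where
  "JG M AG bG s = (1/2) * (\<Sum>j\<in>M. AG j * s j ^ 2) + (\<Sum>j\<in>M. bG j * s j)"

definition nash_eq :: "'c set \<Rightarrow> 'm set \<Rightarrow> ('c \<Rightarrow> 'v set) \<Rightarrow> ('c \<Rightarrow> 'm \<Rightarrow> 'v set)
    \<Rightarrow> ('m \<Rightarrow> real) \<Rightarrow> ('m \<Rightarrow> real)
    \<Rightarrow> ('c \<Rightarrow> 'm \<Rightarrow> real) \<Rightarrow> ('c \<Rightarrow> 'm \<Rightarrow> real) \<Rightarrow> ('c \<Rightarrow> 'm \<Rightarrow> real) \<Rightarrow> ('c \<Rightarrow> 'm \<Rightarrow> real)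
    \<Rightarrow> ('c \<Rightarrow> 'm \<Rightarrow> real) \<Rightarrow> ('c \<Rightarrow> 'm \<Rightarrow> real) \<Rightarrow> bool" where
  "nash_eq C M V F AG bG A B c f D x \<longleftrightarrow>
     x \<in> Kbar C M V F \<and>
     (\<forall>i\<in>C. \<forall>y \<in> Kbar_i M (card (V i)) (F i).
        Jcomp M AG bG (card (V i)) (A i) (B i) (c i) (f i) (D i) (x i) (agg (C - {i}) V x)
        \<le> Jcomp M AG bG (card (V i)) (A i) (B i) (c i) (f i) (D i) y (agg (C - {i}) V x))"

end

theory Submission
  imports Defs
begin

text \<open>Under system optimal pricing the cost of company i differs from
J_G(N_i x^i + sigma(x^{-i})) only by a term independent of x^i, so G is a potential game
with potential J_G o sigma. (Where D_jj = 0 the price is not undone by D_jj D^*_jj = 0, but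
then no vehicle reaches station j, and the constraint for S = {j} forces x^i_j = 0.)
At a Nash equilibrium each x^i therefore minimises the convex function
x^i \<mapsto> J_G(N_i x^i + sigma(x^{-i})) over the convex set Kbar_i, which yields the
first-order condition grad J_G(sigma(x)) . N_i (y^i - x^i) \<ge> 0. Summing over i gives
grad J_G(sigma(x)) . (sigma(y) - sigma(x)) \<ge> 0, and convexity of J_G finishes the proof.\<close>

lemma Kbar_i_zero_if_unreachable:
  assumes "xi \<in> Kbar_i M N F" "{j} \<subset> M" "F j = {}" "N > 0"
  shows "xi j = 0"
proof -
  from assms(1,2) have "xi j \<ge> 0"
    and "real N * (\<Sum>k\<in>{j}. xi k) \<le> max 0 (real (card (\<Union>k\<in>{j}. F k)) - real (card {j}))"
    unfolding Kbar_i_def prob_simplex_def by blast+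
  with assms(3,4) show ?thesis by (simp add: mult_le_0_iff)
qed

lemma Kbar_i_segment:
  assumes x: "x \<in> Kbar_i M N F" and y: "y \<in> Kbar_i M N F" and t: "0 \<le> t" "t \<le> 1"
  shows "(\<lambda>j. x j + t * (y j - x j)) \<in> Kbar_i M N F"
proof -
  let ?z = "\<lambda>j. x j + t * (y j - x j)"
  have sum_z: "(\<Sum>j\<in>S. ?z j) = (1 - t) * (\<Sum>j\<in>S. x j) + t * (\<Sum>j\<in>S. y j)" for S
    by (simp add: sum.distrib sum_distrib_left sum_subtractf algebra_simps)
  have "?z \<in> prob_simplex M"
  proof -
    have "0 \<le> ?z j" if "j \<in> M" for j
    proof -
      have "0 \<le> (1 - t) * x j + t * y j"
        using x y t that unfolding Kbar_i_def prob_simplex_def by simp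
      then show ?thesis by (simp add: algebra_simps)
    qed
    moreover have "?z j = 0" if "j \<notin> M" for j
      using x y that unfolding Kbar_i_def prob_simplex_def by simp
    moreover have "(\<Sum>j\<in>M. ?z j) = 1"
      using x y unfolding Kbar_i_def prob_simplex_def sum_z by simp
    ultimately show ?thesis unfolding prob_simplex_def by blast
  qed
  moreover have "real N * (\<Sum>j\<in>S. ?z j) \<le> max 0 (real (card (\<Union>j\<in>S. F j)) - real (card S))"
    if "S \<subset> M" for S
  proof -
    let ?R = "max 0 (real (card (\<Union>j\<in>S. F j)) - real (card S))"
    have "real N * (\<Sum>j\<in>S. x j) \<le> ?R" "real N * (\<Sum>j\<in>S. y j) \<le> ?R"
      using x y that unfolding Kbar_i_def by blast+
    with t have "(1 - t) * (real N * (\<Sum>j\<in>S. x j)) + t * (real N * (\<Sum>j\<in>S. y j))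
        \<le> (1 - t) * ?R + t * ?R"
      by (intro add_mono mult_left_mono) auto
    then show ?thesis unfolding sum_z by (simp add: algebra_simps)
  qed
  ultimately show ?thesis unfolding Kbar_i_def by blast
qed

lemma Jcomp_eq_JG_increment:
  assumes "\<forall>j\<in>M. D j = 0 \<longrightarrow> xi j = 0"
  shows "Jcomp M AG bG N A B c f D xi s = JG M AG bG (\<lambda>j. real N * xi j + s j) - JG M AG bG s"
proof -
  define E where "E j = (1/2) * (real N ^ 2 * AG j - A j) * xi j + (real N * AG j - B j) * s j
       + (real N * bG j - c j - f j)" for j
  have priced: "xi j * D j * price AG bG N A B c f D xi s j = xi j * E j" if "j \<in> M" for j
    using assms that unfolding price_def E_def Dstar_def by auto
  have "Jcomp M AG bG N A B c f D xi s =
     (\<Sum>j\<in>M. (1/2) * A j * xi j ^ 2 + xi j * B j * s j + c j * xi j + xi j * E j + f j * xi j)"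
    unfolding Jcomp_def using sum.cong[OF refl priced, of M]
    by (simp add: sum.distrib sum_distrib_left mult.assoc)
  also have "\<dots> = (\<Sum>j\<in>M. ((1/2) * AG j * (real N * xi j + s j)^2 + bG j * (real N * xi j + s j))
        - ((1/2) * AG j * s j ^ 2 + bG j * s j))"
    by (rule sum.cong) (auto simp: E_def power2_eq_square algebra_simps)
  also have "\<dots> = JG M AG bG (\<lambda>j. real N * xi j + s j) - JG M AG bG s"
    unfolding JG_def by (simp add: sum.distrib sum_subtractf sum_distrib_left mult.assoc)
  finally show ?thesis .
qed

definition JG_deriv :: "'m set \<Rightarrow> ('m \<Rightarrow> real) \<Rightarrow> ('m \<Rightarrow> real) \<Rightarrow> ('m \<Rightarrow> real) \<Rightarrow> ('m \<Rightarrow> real) \<Rightarrow> real" where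
  "JG_deriv M AG bG s d = (\<Sum>j\<in>M. (AG j * s j + bG j) * d j)"

lemma JG_add_scaled:
  "JG M AG bG (\<lambda>j. s j + t * d j)
     = JG M AG bG s + t * JG_deriv M AG bG s d + t\<^sup>2 * ((\<Sum>j\<in>M. AG j * d j ^ 2) / 2)"
proof -
  have "JG M AG bG (\<lambda>j. s j + t * d j) - JG M AG bG s
      = (\<Sum>j\<in>M. ((1/2) * AG j * (s j + t * d j)^2 + bG j * (s j + t * d j))
                 - ((1/2) * AG j * s j ^ 2 + bG j * s j))"
    unfolding JG_def by (simp add: sum.distrib sum_subtractf sum_distrib_left mult.assoc)
  also have "\<dots> = (\<Sum>j\<in>M. t * ((AG j * s j + bG j) * d j) + t\<^sup>2 * (AG j * d j ^ 2 / 2))"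
    by (rule sum.cong) (auto simp: power2_eq_square algebra_simps)
  also have "\<dots> = t * JG_deriv M AG bG s d + t\<^sup>2 * ((\<Sum>j\<in>M. AG j * d j ^ 2) / 2)"
    unfolding JG_deriv_def by (simp add: sum.distrib sum_distrib_left sum_divide_distrib)
  finally show ?thesis by simp
qed

lemma JG_deriv_sum:
  "JG_deriv M AG bG s (\<lambda>j. \<Sum>i\<in>I. d i j) = (\<Sum>i\<in>I. JG_deriv M AG bG s (d i))"
  unfolding JG_deriv_def by (simp add: sum_distrib_left sum.swap[of _ I])

lemma nonneg_if_nonneg_near_zero:
  fixes g q :: real
  assumes "\<And>t. 0 < t \<Longrightarrow> t \<le> 1 \<Longrightarrow> 0 \<le> t * g + t\<^sup>2 * q"
  shows "0 \<le> g"
proof (rule ccontr)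
  assume "\<not> 0 \<le> g"
  define t where "t = min 1 (- g / (2 * (\<bar>q\<bar> + 1)))"
  have "0 < - g / (2 * (\<bar>q\<bar> + 1))" using \<open>\<not> 0 \<le> g\<close> by (intro divide_pos_pos) auto
  then have t: "0 < t" "t \<le> 1" by (auto simp: t_def)
  have "t \<le> - g / (2 * (\<bar>q\<bar> + 1))" by (simp add: t_def)
  then have "t * (2 * (\<bar>q\<bar> + 1)) \<le> - g"
    by (subst (asm) pos_le_divide_eq) (auto intro: add_nonneg_pos)
  then have "2 * (t * \<bar>q\<bar>) + 2 * t \<le> - g" by (simp add: algebra_simps)
  moreover have "t * q \<le> t * \<bar>q\<bar>" "0 \<le> t * \<bar>q\<bar>" using t by (simp_all add: mult_left_mono)
  ultimately have "g + t * q < 0" using t by linarith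
  then have "t * (g + t * q) < 0" using t by (simp add: mult_pos_neg)
  with assms[OF t] show False by (simp add: power2_eq_square algebra_simps)
qed

lemma JG_deriv_nonneg_if_min:
  assumes x: "x \<in> Kbar_i M N F" and y: "y \<in> Kbar_i M N F"
    and min: "\<And>z. z \<in> Kbar_i M N F \<Longrightarrow>
                JG M AG bG (\<lambda>j. real N * x j + s j) \<le> JG M AG bG (\<lambda>j. real N * z j + s j)"
  shows "0 \<le> JG_deriv M AG bG (\<lambda>j. real N * x j + s j) (\<lambda>j. real N * (y j - x j))"
proof (rule nonneg_if_nonneg_near_zero)
  fix t :: real assume "0 < t" "t \<le> 1"
  let ?\<sigma> = "\<lambda>j. real N * x j + s j" and ?d = "\<lambda>j. real N * (y j - x j)"
  have "(\<lambda>j. real N * (x j + t * (y j - x j)) + s j) = (\<lambda>j. ?\<sigma> j + t * ?d j)"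
    by (simp add: algebra_simps)
  with min[OF Kbar_i_segment[OF x y less_imp_le[OF \<open>0 < t\<close>] \<open>t \<le> 1\<close>]]
  have "JG M AG bG ?\<sigma> \<le> JG M AG bG (\<lambda>j. ?\<sigma> j + t * ?d j)" by simp
  then show "0 \<le> t * JG_deriv M AG bG ?\<sigma> ?d + t\<^sup>2 * ((\<Sum>j\<in>M. AG j * ?d j ^ 2) / 2)"
    unfolding JG_add_scaled by simp
qed

lemma agg_remove:
  assumes "finite I" "i \<in> I"
  shows "agg I V x = (\<lambda>j. real (card (V i)) * x i j + agg (I - {i}) V x j)"
  unfolding agg_def using sum.remove[OF assms] by auto

lemma agg_diff:
  "agg I V y = (\<lambda>j. agg I V x j + (\<Sum>i\<in>I. real (card (V i)) * (y i j - x i j)))"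
  unfolding agg_def by (simp add: right_diff_distrib sum_subtractf)

lemma nash_eq_best_response_JG:
  assumes NE: "nash_eq C M V F AG bG A B c f D x" and "finite C" "i \<in> C"
    and "card M \<ge> 2" "card (V i) \<ge> 1"
    and "\<forall>j\<in>M. F i j \<noteq> {} \<longrightarrow> D i j > 0"
    and z: "z \<in> Kbar_i M (card (V i)) (F i)"
  shows "JG M AG bG (agg C V x)
           \<le> JG M AG bG (\<lambda>j. real (card (V i)) * z j + agg (C - {i}) V x j)"
proof -
  let ?s = "agg (C - {i}) V x" and ?J = "Jcomp M AG bG (card (V i)) (A i) (B i) (c i) (f i) (D i)"
  have "{j} \<subset> M" if "j \<in> M" for j
  proof -
    have "M \<noteq> {j}" using \<open>card M \<ge> 2\<close> by auto
    with that show ?thesis by blast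
  qed
  then have unpriced: "\<forall>j\<in>M. D i j = 0 \<longrightarrow> w j = 0" if "w \<in> Kbar_i M (card (V i)) (F i)" for w
    using Kbar_i_zero_if_unreachable[OF that] assms(5,6) by fastforce
  have x: "x i \<in> Kbar_i M (card (V i)) (F i)"
    using NE \<open>i \<in> C\<close> unfolding nash_eq_def Kbar_def by blast
  have "?J (x i) ?s \<le> ?J z ?s" using NE \<open>i \<in> C\<close> z unfolding nash_eq_def by blast
  then show ?thesis
    unfolding agg_remove[OF assms(2,3)] Jcomp_eq_JG_increment[OF unpriced[OF x]]
      Jcomp_eq_JG_increment[OF unpriced[OF z]] by simp
qed

theorem theorem2:
  fixes C :: "'c set" and M :: "'m set" and V :: "'c \<Rightarrow> 'v set" and F :: "'c \<Rightarrow> 'm \<Rightarrow> 'v set"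
    and AG bG :: "'m \<Rightarrow> real" and A B c f D :: "'c \<Rightarrow> 'm \<Rightarrow> real"
    and xs :: "'c \<Rightarrow> 'm \<Rightarrow> real"
  assumes C_fin: "finite C" and C_ne: "C \<noteq> {}"
    and M_fin: "finite M" and M_card: "card M \<ge> 2"
    and V_fin: "\<forall>i\<in>C. finite (V i)" and V_ne: "\<forall>i\<in>C. card (V i) \<ge> 1"
    and F_sub: "\<forall>i\<in>C. \<forall>j\<in>M. F i j \<subseteq> V i"
    and AG_pos: "\<forall>j\<in>M. AG j > 0"
    and D_nonneg: "\<forall>i\<in>C. \<forall>j\<in>M. D i j \<ge> 0"
    and D_pos: "\<forall>i\<in>C. \<forall>j\<in>M. F i j \<noteq> {} \<longrightarrow> D i j > 0"
    and reach: "\<forall>i\<in>C. \<forall>v\<in>V i. \<exists>j\<in>M. v \<in> F i j"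
    and K_ne: "\<forall>i\<in>C. Kbar_i M (card (V i)) (F i) \<noteq> {}"
    and NE: "nash_eq C M V F AG bG A B c f D xs"
  shows "xs \<in> Kbar C M V F \<and>
         (\<forall>y\<in>Kbar C M V F. JG M AG bG (agg C V xs) \<le> JG M AG bG (agg C V y))"
proof -
  have xs: "xs \<in> Kbar C M V F" using NE unfolding nash_eq_def by blast
  have "JG M AG bG (agg C V xs) \<le> JG M AG bG (agg C V y)" if y: "y \<in> Kbar C M V F" for y
  proof -
    define d where "d i j = real (card (V i)) * (y i j - xs i j)" for i j
    have "0 \<le> JG_deriv M AG bG (agg C V xs) (d i)" if i: "i \<in> C" for i
    proof -
      have "xs i \<in> Kbar_i M (card (V i)) (F i)" "y i \<in> Kbar_i M (card (V i)) (F i)"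
        using xs y i unfolding Kbar_def by blast+
      moreover have "card (V i) \<ge> 1" "\<forall>j\<in>M. F i j \<noteq> {} \<longrightarrow> D i j > 0"
        using V_ne D_pos i by auto
      ultimately show ?thesis
        using JG_deriv_nonneg_if_min nash_eq_best_response_JG[OF NE C_fin i M_card]
        unfolding agg_remove[OF C_fin i] d_def by blast
    qed
    then have "0 \<le> JG_deriv M AG bG (agg C V xs) (\<lambda>j. \<Sum>i\<in>C. d i j)"
      unfolding JG_deriv_sum by (simp add: sum_nonneg)
    moreover have "0 \<le> (\<Sum>j\<in>M. AG j * (\<Sum>i\<in>C. d i j)\<^sup>2)"
      using AG_pos by (simp add: sum_nonneg less_imp_le)
    ultimately show ?thesis
      using JG_add_scaled[of M AG bG "agg C V xs" 1 "\<lambda>j. \<Sum>i\<in>C. d i j"]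
      unfolding agg_diff[of C V y xs] d_def by simp
  qed
  with xs show ?thesis by blast
qed

end
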